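(* Let $q$ be a large prime, $m=o(\log q)$, and $t$ a positive integer with $t^m=o(\sqrt q)$. Let $s_2,\dots,s_{m-1}$ be the elements (other than $0,1$) of a uniformly random evaluation set, i.e. distinct random elements of $\mathbb{F}_q\setminus\{0,1\}$. Define \[A_0=\tfrac{1}{1-s_2}[t]+\cdots+\tfrac{1}{1-s_{m-1}}[t],\qquad A_1=\tfrac{1}{s_2}[t]+\cdots+\tfrac{1}{s_{m-1}}[t].\] Then with high probability (as $q\to\infty$), $|A_0|=\Omega(t^{m-2})$ and $|A_1|=\Omega(t^{m-2})$.
   Context: $[t]=\{1,\dots,t\}$ viewed as a subset of $\mathbb{F}_q$; for $\lambda\in\mathbb{F}_q$, $\lambda[t]=\{\lambda a: a\in[t]\}$; for subsets $A,B$ of an abelian group, $A+B=\{a+b: a\in A,b\in B\}$. *)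

theory Defs
  imports "HOL-Analysis.Analysis" "HOL-Number_Theory.Number_Theory"
begin

text \<open>Elements of F_p are represented by their residues in {0..<p}.\<close>

definition inv_mod :: "nat \<Rightarrow> nat \<Rightarrow> nat" where
  "inv_mod p x = (THE y. y < p \<and> [x * y = 1] (mod p))"

definition dil :: "nat \<Rightarrow> nat \<Rightarrow> nat \<Rightarrow> nat set" where
  "dil p lam t = (\<lambda>a. (lam * a) mod p) ` {1..t}"

fun sumset_mod :: "nat \<Rightarrow> nat set list \<Rightarrow> nat set" where
  "sumset_mod p [] = {0}"
| "sumset_mod p (A # As) = {(a + b) mod p | a b. a \<in> A \<and> b \<in> sumset_mod p As}"

text \<open>A_0 = 1/(1-s_2)[t] + ... + 1/(1-s_{m-1})[t], with xs = [s_2,...,s_{m-1}]\<close>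
definition A0 :: "nat \<Rightarrow> nat \<Rightarrow> nat list \<Rightarrow> nat set" where
  "A0 p t xs = sumset_mod p (map (\<lambda>s. dil p (inv_mod p ((p + 1 - s) mod p)) t) xs)"

definition A1 :: "nat \<Rightarrow> nat \<Rightarrow> nat list \<Rightarrow> nat set" where
  "A1 p t xs = sumset_mod p (map (\<lambda>s. dil p (inv_mod p s) t) xs)"

text \<open>All possible choices of (s_2,...,s_{m-1}): distinct elements of F_p minus {0,1}.
  A uniformly random evaluation set is a uniformly random element of this set.\<close>
definition eval_tuples :: "nat \<Rightarrow> nat \<Rightarrow> nat list set" where
  "eval_tuples p m = {xs. length xs = m - 2 \<and> distinct xs \<and> set xs \<subseteq> {2..<p}}"

definition good_prob :: "nat \<Rightarrow> nat \<Rightarrow> nat \<Rightarrow> real \<Rightarrow> real" where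
  "good_prob p m t c =
     real (card {xs \<in> eval_tuples p m.
                 real (card (A0 p t xs)) \<ge> c * real t ^ (m - 2) \<and>
                 real (card (A1 p t xs)) \<ge> c * real t ^ (m - 2)})
     / real (card (eval_tuples p m))"

definition primes_at_top :: "nat filter" where
  "primes_at_top = inf at_top (principal {q. prime q})"

end

theory Submission
  imports Defs
begin

text \<open>A sumset l_1[t] + ... + l_k[t] in F_q has the full size t^k unless the l_i satisfy a
  nontrivial relation l_1 d_1 + ... + l_k d_k = 0 with |d_i| < t: two representations of the same
  element differ by such a relation. If d_j \<noteq> 0, the relation determines l_j from the other l_i;
  since s \<mapsto> 1/s and s \<mapsto> 1/(1 - s) are injective on F_q - {0,1}, at most a fraction 1/(q + 1 - m)
  of the evaluation sets satisfy it. A union bound over the (2t - 1)^(m-2) coefficient vectors shows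
  that |A_0| = |A_1| = t^(m-2) with probability at least 1 - 2 (2t - 1)^(m-2) / (q + 1 - m), which
  tends to 1 because m = o(log q) eventually gives 2^m \<le> sqrt q, while t^m = o(sqrt q).\<close>

definition lin_comb :: "nat list \<Rightarrow> 'a::comm_semiring_1 list \<Rightarrow> 'a" where
  "lin_comb ls cs = (\<Sum>i<length ls. of_nat (ls ! i) * cs ! i)"

definition coeff_lists :: "'a set \<Rightarrow> nat \<Rightarrow> 'a list set" where
  "coeff_lists A k = {cs. set cs \<subseteq> A \<and> length cs = k}"

lemma lin_comb_Cons [simp]: "lin_comb (l # ls) (c # cs) = of_nat l * c + lin_comb ls cs"
  unfolding lin_comb_def by (simp del: sum.lessThan_Suc add: sum.lessThan_Suc_shift)

lemma finite_coeff_lists: "finite A \<Longrightarrow> finite (coeff_lists A k)"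
  unfolding coeff_lists_def by (simp add: finite_lists_length_eq)

lemma card_coeff_lists: "finite A \<Longrightarrow> card (coeff_lists A k) = card A ^ k"
  unfolding coeff_lists_def by (simp add: card_lists_length_eq)

lemma coeff_lists_0 [simp]: "coeff_lists A 0 = {[]}"
  unfolding coeff_lists_def by auto

lemma coeff_lists_Suc:
  "coeff_lists A (Suc k) = (\<lambda>(c, cs). c # cs) ` (A \<times> coeff_lists A k)"
  unfolding coeff_lists_def by (auto simp: image_iff length_Suc_conv)

abbreviation dil_sumset :: "nat \<Rightarrow> nat \<Rightarrow> nat list \<Rightarrow> nat set" where
  "dil_sumset p t ls \<equiv> sumset_mod p (map (\<lambda>l. dil p l t) ls)"

lemma dil_sumset_eq_image:
  "dil_sumset p t ls = (\<lambda>as. lin_comb ls as mod p) ` coeff_lists {1..t} (length ls)"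
proof (induction ls)
  case Nil
  show ?case
    by (simp add: lin_comb_def)
next
  case (Cons l ls)
  have "dil_sumset p t (l # ls) = (\<lambda>(a, b). (a + b) mod p) ` (dil p l t \<times> dil_sumset p t ls)"
    by auto
  also have "dil p l t \<times> dil_sumset p t ls =
      map_prod (\<lambda>c. l * c mod p) (\<lambda>cs. lin_comb ls cs mod p) ` ({1..t} \<times> coeff_lists {1..t} (length ls))"
    by (simp only: Cons.IH) (simp add: dil_def map_prod_surj_on)
  finally show ?case
    by (simp add: coeff_lists_Suc image_image case_prod_beta' mod_add_eq)
qed

definition has_short_relation :: "nat \<Rightarrow> nat \<Rightarrow> nat list \<Rightarrow> bool" where
  "has_short_relation p t ls \<longleftrightarrow>
     (\<exists>ds\<in>coeff_lists {-int t<..<int t} (length ls). (\<exists>d\<in>set ds. d \<noteq> 0) \<and> [lin_comb ls ds = 0] (mod int p))"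

lemma lin_comb_diff:
  assumes "length as = length ls" and "length bs = length ls"
  shows "lin_comb ls (map2 (\<lambda>a b. int a - int b) as bs) = int (lin_comb ls as) - int (lin_comb ls bs)"
  using assms unfolding lin_comb_def
  by (simp add: algebra_simps flip: sum_subtractf)

lemma card_dil_sumset:
  assumes "\<not> has_short_relation p t ls"
  shows "card (dil_sumset p t ls) = t ^ length ls"
proof -
  have "inj_on (\<lambda>as. lin_comb ls as mod p) (coeff_lists {1..t} (length ls))"
  proof (rule inj_onI)
    fix as bs
    assume as: "as \<in> coeff_lists {1..t} (length ls)" and bs: "bs \<in> coeff_lists {1..t} (length ls)"
      and eq: "lin_comb ls as mod p = lin_comb ls bs mod p"
    define ds where "ds = map2 (\<lambda>a b. int a - int b) as bs"
    have len: "length as = length ls" "length bs = length ls"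
      using as bs by (auto simp: coeff_lists_def)
    have "ds \<in> coeff_lists {-int t<..<int t} (length ls)"
      using as bs by (force simp: ds_def coeff_lists_def dest: set_zip_leftD set_zip_rightD)
    moreover have "[lin_comb ls ds = 0] (mod int p)"
      using eq by (simp add: ds_def lin_comb_diff len cong_iff_dvd_diff flip: cong_int_iff cong_def)
    ultimately have "\<forall>d\<in>set ds. d = 0"
      using assms unfolding has_short_relation_def by blast
    then show "as = bs"
      using len unfolding all_set_conv_all_nth by (intro nth_equalityI) (auto simp: ds_def)
  qed
  then show ?thesis
    by (simp add: dil_sumset_eq_image card_image card_coeff_lists)
qed

definition distinct_tuples :: "'a set \<Rightarrow> nat \<Rightarrow> 'a list set" where
  "distinct_tuples S k = {xs. length xs = k \<and> distinct xs \<and> set xs \<subseteq> S}"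

lemma finite_distinct_tuples: "finite S \<Longrightarrow> finite (distinct_tuples S k)"
  unfolding distinct_tuples_def
  by (rule finite_subset[OF _ finite_lists_length_eq[of S k]]) auto

lemma card_distinct_tuples_Suc:
  assumes "finite S" and "k < card S"
  shows "card (distinct_tuples S (Suc k)) = card (distinct_tuples S k) * (card S - k)"
proof -
  have "card (distinct_tuples S (Suc k)) = \<Prod>{card S - k .. card S}"
    using assms by (simp add: distinct_tuples_def card_lists_distinct_length_eq Suc_diff_Suc)
  also have "\<dots> = (card S - k) * \<Prod>{Suc (card S - k) .. card S}"
    by (rule prod.atLeast_Suc_atMost) simp
  also have "\<Prod>{Suc (card S - k) .. card S} = card (distinct_tuples S k)"
    using assms by (simp add: distinct_tuples_def card_lists_distinct_length_eq)
  finally show ?thesis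
    by simp
qed

lemma card_distinct_tuples_pos:
  assumes "finite S" and "k \<le> card S"
  shows "0 < card (distinct_tuples S k)"
  using assms by (simp add: distinct_tuples_def card_lists_distinct_length_eq prod_pos)

lemma eval_tuples_eq_distinct_tuples: "eval_tuples p m = distinct_tuples {2..<p} (m - 2)"
  by (auto simp: eval_tuples_def distinct_tuples_def)

definition delete_at :: "nat \<Rightarrow> 'a list \<Rightarrow> 'a list" where
  "delete_at j xs = take j xs @ drop (Suc j) xs"

lemma delete_at_distinct_tuples:
  assumes "xs \<in> distinct_tuples S (Suc k)" and "j < Suc k"
  shows "delete_at j xs \<in> distinct_tuples S k"
proof -
  have "distinct (take j xs @ drop (Suc j) xs)"
    using assms set_take_disj_set_drop_if_distinct[of xs j "Suc j"]
    by (auto simp: distinct_tuples_def)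
  moreover have "set (take j xs @ drop (Suc j) xs) \<subseteq> S"
    using assms by (auto simp: distinct_tuples_def dest: in_set_takeD in_set_dropD)
  ultimately show ?thesis
    using assms by (auto simp: distinct_tuples_def delete_at_def)
qed

lemma delete_at_eq_imp_update:
  assumes "length ys = length xs" and "j < length xs" and "delete_at j xs = delete_at j ys"
  shows "ys = xs[j := ys ! j]"
  using assms id_take_nth_drop[of j ys] upd_conv_take_nth_drop[of j xs "ys ! j"]
  by (simp add: delete_at_def)

lemma lin_comb_update:
  fixes cs :: "'a::comm_ring_1 list"
  assumes "j < length ls"
  shows "lin_comb (ls[j := l]) cs = lin_comb ls cs + (of_nat l - of_nat (ls ! j)) * cs ! j"
proof -
  have "lin_comb ls' cs = of_nat (ls' ! j) * cs ! j + (\<Sum>i\<in>{..<length ls} - {j}. of_nat (ls' ! i) * cs ! i)"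
    if "length ls' = length ls" for ls'
    using that assms by (simp add: lin_comb_def sum.remove)
  from this[of "ls[j := l]"] this[of ls] show ?thesis
    using assms by (simp add: algebra_simps)
qed

lemma card_relation_solutions_le:
  fixes ds :: "int list"
  assumes S: "finite S" and inj: "inj_on (\<lambda>s. g s mod p) S"
    and ds: "length ds = Suc k" and j: "j < Suc k" and cop: "coprime (ds ! j) (int p)"
  shows "card {xs \<in> distinct_tuples S (Suc k). [lin_comb (map g xs) ds = 0] (mod int p)}
    \<le> card (distinct_tuples S k)"
proof (rule card_inj_on_le[of "delete_at j"])
  show "delete_at j ` {xs \<in> distinct_tuples S (Suc k). [lin_comb (map g xs) ds = 0] (mod int p)}
      \<subseteq> distinct_tuples S k"
    using delete_at_distinct_tuples[OF _ j] by blast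
  show "finite (distinct_tuples S k)"
    using S by (rule finite_distinct_tuples)
  show "inj_on (delete_at j) {xs \<in> distinct_tuples S (Suc k). [lin_comb (map g xs) ds = 0] (mod int p)}"
  proof (rule inj_onI)
    fix xs ys
    assume xs: "xs \<in> {xs \<in> distinct_tuples S (Suc k). [lin_comb (map g xs) ds = 0] (mod int p)}"
      and ys: "ys \<in> {xs \<in> distinct_tuples S (Suc k). [lin_comb (map g xs) ds = 0] (mod int p)}"
      and eq: "delete_at j xs = delete_at j ys"
    have len: "length xs = Suc k" "length ys = Suc k"
      using xs ys by (auto simp: distinct_tuples_def)
    have ys_upd: "ys = xs[j := ys ! j]"
      using len j eq by (intro delete_at_eq_imp_update) auto
    have "lin_comb (map g ys) ds - lin_comb (map g xs) ds = (int (g (ys ! j)) - int (g (xs ! j))) * ds ! j"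
      using len j by (subst ys_upd) (simp add: map_update lin_comb_update)
    moreover have "[lin_comb (map g ys) ds - lin_comb (map g xs) ds = 0 - 0] (mod int p)"
      using xs ys by (intro cong_diff) auto
    ultimately have "[(int (g (ys ! j)) - int (g (xs ! j))) * ds ! j = 0] (mod int p)"
      by simp
    with cop have "[int (g (ys ! j)) = int (g (xs ! j))] (mod int p)"
      by (simp add: cong_iff_dvd_diff coprime_dvd_mult_left_iff coprime_commute)
    then have "g (ys ! j) mod p = g (xs ! j) mod p"
      by (metis cong_int_iff cong_def)
    moreover have "xs ! j \<in> S" "ys ! j \<in> S"
      using xs ys len j by (auto simp: distinct_tuples_def)
    ultimately have "ys ! j = xs ! j"
      using inj by (auto dest: inj_onD)
    then show "xs = ys"
      using ys_upd by simp
  qed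
qed

lemma coprime_prime_if_abs_less:
  fixes d :: int
  assumes "prime p" and "d \<noteq> 0" and "\<bar>d\<bar> < int p"
  shows "coprime d (int p)"
proof -
  have "\<not> int p dvd d"
    using assms(2,3) dvd_imp_le_int[of d "int p"] by auto
  then have "coprime (int p) d"
    by (intro prime_imp_coprime) (simp add: assms(1))
  then show ?thesis
    by (simp add: coprime_commute)
qed

lemma card_short_relation_tuples_le:
  assumes p: "prime p" and tp: "t \<le> p" and S: "finite S" and inj: "inj_on (\<lambda>s. g s mod p) S"
  shows "card {xs \<in> distinct_tuples S (Suc k). has_short_relation p t (map g xs)}
    \<le> (2 * t - 1) ^ Suc k * card (distinct_tuples S k)"
proof -
  let ?D = "coeff_lists {-int t<..<int t} (Suc k)"
  let ?B = "\<lambda>ds. {xs \<in> distinct_tuples S (Suc k).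
    (\<exists>d\<in>set ds. d \<noteq> 0) \<and> [lin_comb (map g xs) ds = 0] (mod int p)}"
  have card_B: "card (?B ds) \<le> card (distinct_tuples S k)" if ds: "ds \<in> ?D" for ds
  proof (cases "\<exists>d\<in>set ds. d \<noteq> 0")
    case True
    then obtain j where j: "j < length ds" "ds ! j \<noteq> 0"
      by (auto simp: in_set_conv_nth)
    have "ds ! j \<in> set ds"
      using j(1) by (rule nth_mem)
    then have "ds ! j \<in> {-int t<..<int t}"
      using ds by (auto simp: coeff_lists_def)
    then have "\<bar>ds ! j\<bar> < int p"
      using tp by auto
    then have "coprime (ds ! j) (int p)"
      using p j(2) by (rule coprime_prime_if_abs_less[rotated 2])
    moreover have "length ds = Suc k"
      using ds by (simp add: coeff_lists_def)
    ultimately have "card {xs \<in> distinct_tuples S (Suc k). [lin_comb (map g xs) ds = 0] (mod int p)}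
        \<le> card (distinct_tuples S k)"
      using card_relation_solutions_le[OF S inj] j(1) by simp
    moreover have "card (?B ds)
        \<le> card {xs \<in> distinct_tuples S (Suc k). [lin_comb (map g xs) ds = 0] (mod int p)}"
      by (rule card_mono) (auto intro: finite_subset[OF _ finite_distinct_tuples[OF S]])
    ultimately show ?thesis
      by linarith
  qed simp
  have card_interval: "card {-int t<..<int t} = 2 * t - 1"
    by simp
  have "{xs \<in> distinct_tuples S (Suc k). has_short_relation p t (map g xs)} \<subseteq> (\<Union>ds\<in>?D. ?B ds)"
    by (auto simp: has_short_relation_def distinct_tuples_def)
  then have "card {xs \<in> distinct_tuples S (Suc k). has_short_relation p t (map g xs)}
      \<le> card (\<Union>ds\<in>?D. ?B ds)"
    by (rule card_mono[rotated]) (auto intro: finite_subset[OF _ finite_distinct_tuples[OF S]])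
  also have "\<dots> \<le> (\<Sum>ds\<in>?D. card (?B ds))"
    by (rule card_UN_le) (simp add: finite_coeff_lists)
  also have "\<dots> \<le> card ?D * card (distinct_tuples S k)"
    using sum_mono[OF card_B] by simp
  also have "card ?D = (2 * t - 1) ^ Suc k"
    using card_interval by (simp only: card_coeff_lists finite_greaterThanLessThan_int)
  finally show ?thesis .
qed

lemma short_relation_fraction_le:
  assumes p: "prime p" and tp: "t \<le> p" and S: "finite S" and inj: "inj_on (\<lambda>s. g s mod p) S"
    and k: "k \<le> card S"
  shows "real (card {xs \<in> distinct_tuples S k. has_short_relation p t (map g xs)})
      / real (card (distinct_tuples S k))
    \<le> real ((2 * t - 1) ^ k) / (real (card S) + 1 - real k)"
proof (cases k)
  case 0
  then have none: "{xs \<in> distinct_tuples S k. has_short_relation p t (map g xs)} = {}"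
    by (auto simp: distinct_tuples_def has_short_relation_def)
  show ?thesis
    unfolding none using \<open>k = 0\<close> by simp
next
  case (Suc k')
  define N where "N = real (card (distinct_tuples S k'))"
  have N: "N > 0"
    using S k Suc by (simp add: N_def card_distinct_tuples_pos)
  have D: "real (card (distinct_tuples S k)) = N * (real (card S) + 1 - real k)"
    using S k Suc by (simp add: N_def card_distinct_tuples_Suc)
  have "real (card {xs \<in> distinct_tuples S k. has_short_relation p t (map g xs)})
      \<le> real ((2 * t - 1) ^ k) * N"
    using card_short_relation_tuples_le[OF p tp S inj, of k'] Suc
    unfolding N_def by (metis of_nat_le_iff of_nat_mult)
  moreover have "real (card S) + 1 - real k > 0"
    using k by linarith
  ultimately show ?thesis
    unfolding D using N by (simp add: divide_simps mult.commute)
qed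

lemma inv_mod_spec:
  assumes p: "prime p" and x: "\<not> p dvd x"
  shows "inv_mod p x < p \<and> [x * inv_mod p x = 1] (mod p)"
proof -
  have cop: "coprime x p"
    using prime_imp_coprime[OF p x] by (simp add: coprime_commute)
  then obtain y where y: "[x * y = 1] (mod p)"
    using cong_solve_coprime_nat[OF cop] by auto
  have "y mod p < p \<and> [x * (y mod p) = 1] (mod p)"
    using y p by (simp add: prime_gt_0_nat cong_def mod_mult_right_eq)
  moreover have "z = z'" if "z < p \<and> [x * z = 1] (mod p)" and "z' < p \<and> [x * z' = 1] (mod p)" for z z'
  proof -
    have "[x * z = x * z'] (mod p)"
      using that by (meson cong_sym cong_trans)
    then have "[z = z'] (mod p)"
      using cop by (simp add: cong_mult_lcancel_nat)
    then show ?thesis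
      using that cong_less_modulus_unique_nat by blast
  qed
  ultimately have "\<exists>!z. z < p \<and> [x * z = 1] (mod p)"
    by blast
  then show ?thesis
    unfolding inv_mod_def by (rule theI')
qed

lemma inj_on_inv_mod:
  assumes p: "prime p"
  shows "inj_on (inv_mod p) {1..<p}"
proof (rule inj_onI)
  fix x y
  assume x: "x \<in> {1..<p}" and y: "y \<in> {1..<p}" and eq: "inv_mod p x = inv_mod p y"
  let ?i = "inv_mod p x"
  have "\<not> p dvd x" "\<not> p dvd y"
    using x y by (auto dest: dvd_imp_le)
  then have xi: "[x * ?i = 1] (mod p)" and yi: "[y * ?i = 1] (mod p)"
    using inv_mod_spec[OF p] eq by metis+
  have "[x * (y * ?i) = x * 1] (mod p)"
    using yi by (rule cong_scalar_left)
  moreover have "[y * (x * ?i) = y * 1] (mod p)"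
    using xi by (rule cong_scalar_left)
  ultimately have "[x = y] (mod p)"
    by (simp add: ac_simps) (meson cong_sym cong_trans)
  then show "x = y"
    using x y cong_less_modulus_unique_nat by simp
qed

lemma inj_on_inv_mod_comp:
  assumes p: "prime p" and h: "inj_on h S" "h ` S \<subseteq> {1..<p}"
  shows "inj_on (\<lambda>s. inv_mod p (h s) mod p) S"
proof -
  have "inv_mod p (h s) mod p = inv_mod p (h s)" if "s \<in> S" for s
  proof -
    have "h s \<in> {1..<p}"
      using h(2) that by blast
    then have "\<not> p dvd h s"
      by (auto dest: dvd_imp_le)
    then show ?thesis
      using inv_mod_spec[OF p] by simp
  qed
  moreover have "inj_on (inv_mod p \<circ> h) S"
    by (rule comp_inj_on[OF h(1) inj_on_subset[OF inj_on_inv_mod[OF p] h(2)]])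
  ultimately show ?thesis
    by (simp add: inj_on_def)
qed

lemma card_filter_ge_fraction:
  assumes "finite A" and "A \<noteq> {}" and "\<And>x. x \<in> A \<Longrightarrow> \<not> P x \<Longrightarrow> Q x \<or> R x"
  shows "1 - real (card {x \<in> A. Q x}) / real (card A) - real (card {x \<in> A. R x}) / real (card A)
    \<le> real (card {x \<in> A. P x}) / real (card A)"
proof -
  have "A \<subseteq> {x \<in> A. P x} \<union> {x \<in> A. Q x} \<union> {x \<in> A. R x}"
    using assms(3) by blast
  then have "card A \<le> card ({x \<in> A. P x} \<union> {x \<in> A. Q x} \<union> {x \<in> A. R x})"
    using assms(1) by (intro card_mono) auto
  also have "\<dots> \<le> card {x \<in> A. P x} + card {x \<in> A. Q x} + card {x \<in> A. R x}"
    by (meson add_right_mono card_Un_le le_trans)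
  finally have "real (card A) \<le> real (card {x \<in> A. P x}) + real (card {x \<in> A. Q x}) + real (card {x \<in> A. R x})"
    by linarith
  then have "(real (card A) - real (card {x \<in> A. Q x}) - real (card {x \<in> A. R x})) / real (card A)
      \<le> real (card {x \<in> A. P x}) / real (card A)"
    by (intro divide_right_mono) auto
  moreover have "card A \<noteq> 0"
    using assms(1,2) card_0_eq by blast
  ultimately show ?thesis
    by (simp add: diff_divide_distrib)
qed

lemma card_filter_le_fraction_1:
  assumes "finite A"
  shows "real (card {x \<in> A. P x}) / real (card A) \<le> 1"
proof -
  have "card {x \<in> A. P x} \<le> card A"
    using assms by (intro card_mono) auto
  then show ?thesis
    by (auto simp: divide_le_eq_1)
qed

lemma good_prob_ge:
  assumes p: "prime p" and tp: "t \<le> p" and m: "2 \<le> m" "m \<le> p"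
  shows "1 - 2 * (real ((2 * t - 1) ^ (m - 2)) / (real p + 1 - real m)) \<le> good_prob p m t 1"
proof -
  define S where "S = {2..<p}"
  define g0 where "g0 s = inv_mod p ((p + 1 - s) mod p)" for s
  define g1 where "g1 s = inv_mod p s" for s
  let ?D = "distinct_tuples S (m - 2)"
  let ?bound = "real ((2 * t - 1) ^ (m - 2)) / (real p + 1 - real m)"
  have tuples: "eval_tuples p m = ?D"
    unfolding S_def by (rule eval_tuples_eq_distinct_tuples)
  have S: "finite S" "m - 2 \<le> card S" "real (card S) + 1 - real (m - 2) = real p + 1 - real m"
    using m p prime_ge_2_nat[OF p] by (auto simp: S_def)
  have inj0: "inj_on (\<lambda>s. g0 s mod p) S"
    unfolding g0_def S_def by (rule inj_on_inv_mod_comp[OF p]) (auto simp: inj_on_def)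
  have inj1: "inj_on (\<lambda>s. g1 s mod p) S"
    unfolding g1_def S_def using inj_on_inv_mod_comp[OF p, of id] by auto
  have A: "A0 p t xs = dil_sumset p t (map g0 xs)" "A1 p t xs = dil_sumset p t (map g1 xs)" for xs
    by (simp_all add: A0_def A1_def g0_def g1_def o_def)
  have "?D \<noteq> {}"
    using card_distinct_tuples_pos[OF S(1,2)] by auto
  moreover have "has_short_relation p t (map g0 xs) \<or> has_short_relation p t (map g1 xs)"
    if "xs \<in> ?D" and "\<not> (real (card (A0 p t xs)) \<ge> 1 * real t ^ (m - 2) \<and>
      real (card (A1 p t xs)) \<ge> 1 * real t ^ (m - 2))" for xs
  proof (rule ccontr)
    assume "\<not> (has_short_relation p t (map g0 xs) \<or> has_short_relation p t (map g1 xs))"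
    then have "card (A0 p t xs) = t ^ (m - 2)" "card (A1 p t xs) = t ^ (m - 2)"
      using that(1) unfolding A by (auto simp: card_dil_sumset distinct_tuples_def simp del: map_map)
    with that(2) show False
      by simp
  qed
  ultimately have "1 - real (card {xs \<in> ?D. has_short_relation p t (map g0 xs)}) / real (card ?D)
      - real (card {xs \<in> ?D. has_short_relation p t (map g1 xs)}) / real (card ?D)
    \<le> good_prob p m t 1"
    unfolding good_prob_def tuples by (rule card_filter_ge_fraction[OF finite_distinct_tuples[OF S(1)]])
  moreover have fraction: "real (card {xs \<in> ?D. has_short_relation p t (map g xs)}) / real (card ?D) \<le> ?bound"
    if "inj_on (\<lambda>s. g s mod p) S" for g
    using short_relation_fraction_le[OF p tp S(1) that S(2)] S(3) by simp
  ultimately show ?thesis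
    using fraction[OF inj0] fraction[OF inj1] by linarith
qed

lemma good_prob_le_1: "good_prob p m t c \<le> 1"
  unfolding good_prob_def eval_tuples_eq_distinct_tuples
  by (simp add: card_filter_le_fraction_1 finite_distinct_tuples)

lemma real_le_two_power: "real n \<le> 2 ^ n"
  using less_exp[of n] by (metis of_nat_less_iff of_nat_numeral of_nat_power less_imp_le)

lemma sqrt_le_half:
  fixes x :: real
  assumes "4 \<le> x"
  shows "sqrt x \<le> x / 2"
proof -
  have "sqrt 4 \<le> sqrt x"
    using assms by (rule real_sqrt_le_mono)
  then have "2 \<le> sqrt x"
    by simp
  then have "2 * sqrt x \<le> sqrt x * sqrt x"
    using assms by (intro mult_right_mono) auto
  moreover have "sqrt x * sqrt x = x"
    using assms by simp
  ultimately show ?thesis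
    by linarith
qed

lemma eventually_two_pow_le_sqrt:
  fixes m :: "nat \<Rightarrow> nat"
  assumes lim: "((\<lambda>q. real (m q) / ln (real q)) \<longlongrightarrow> 0) F" and F: "F \<le> at_top"
  shows "\<forall>\<^sub>F q in F. 2 ^ m q \<le> sqrt (real q)"
proof -
  have "\<forall>\<^sub>F q in F. 2 \<le> q"
    using F by (rule filter_leD) (rule eventually_ge_at_top)
  moreover have "\<forall>\<^sub>F q in F. real (m q) / ln (real q) < 1 / (2 * ln 2)"
    by (rule order_tendstoD(2)[OF lim]) simp
  ultimately show ?thesis
  proof eventually_elim
    case (elim q)
    then have "real (m q) * ln 2 \<le> ln (real q) / 2"
      by (simp add: field_simps)
    then have "exp (real (m q) * ln 2) \<le> exp (ln (real q) / 2)"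
      by simp
    moreover have "exp (real (m q) * ln 2) = 2 ^ m q"
      by (metis exp_ln exp_of_nat_mult zero_less_numeral)
    moreover have "exp (ln (real q) / 2) = sqrt (real q)"
      using elim(1) by (simp add: powr_def flip: powr_half_sqrt)
    ultimately show ?case
      by simp
  qed
qed

lemma failure_bound_le:
  fixes q t m :: nat
  assumes q: "4 \<le> q" and t: "1 \<le> t" and m: "2 \<le> m" and two_pow: "2 ^ m \<le> sqrt (real q)"
  shows "real ((2 * t - 1) ^ (m - 2)) / (real q + 1 - real m) \<le> 2 * (real t ^ m / sqrt (real q))"
proof -
  have "real m \<le> 2 ^ m"
    by (rule real_le_two_power)
  moreover have "sqrt (real q) \<le> real q / 2"
    using q by (intro sqrt_le_half) simp
  ultimately have den: "real q / 2 \<le> real q + 1 - real m"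
    using two_pow by linarith
  have "(2 * t - 1) ^ (m - 2) \<le> (2 * t) ^ (m - 2)"
    by (rule power_mono) auto
  also have "\<dots> \<le> (2 * t) ^ m"
    using t by (intro power_increasing) auto
  finally have "real ((2 * t - 1) ^ (m - 2)) \<le> real ((2 * t) ^ m)"
    by (simp only: of_nat_le_iff)
  also have "\<dots> = 2 ^ m * real t ^ m"
    by (simp add: power_mult_distrib)
  also have "\<dots> \<le> sqrt (real q) * real t ^ m"
    using two_pow by (intro mult_right_mono) auto
  finally have num: "real ((2 * t - 1) ^ (m - 2)) \<le> sqrt (real q) * real t ^ m" .
  have "real ((2 * t - 1) ^ (m - 2)) / (real q + 1 - real m) \<le> sqrt (real q) * real t ^ m / (real q / 2)"
    using num den q by (intro frac_le) auto
  also have "\<dots> = 2 * (real t ^ m / sqrt (real q))"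
    using q by (simp add: field_simps flip: real_sqrt_mult_self[of "real q"])
  finally show ?thesis .
qed

theorem mainTheorem8:
  fixes m t :: "nat \<Rightarrow> nat"
  assumes m_ge: "\<And>q. m q \<ge> 2"
    and t_pos: "\<And>q. t q \<ge> 1"
    and m_small: "((\<lambda>q. real (m q) / ln (real q)) \<longlongrightarrow> 0) primes_at_top"
    and t_small: "((\<lambda>q. real (t q) ^ m q / sqrt (real q)) \<longlongrightarrow> 0) primes_at_top"
  shows "\<exists>c > 0. ((\<lambda>q. good_prob q (m q) (t q) c) \<longlongrightarrow> 1) primes_at_top"
proof (intro exI conjI)
  have at_top: "primes_at_top \<le> at_top"
    unfolding primes_at_top_def by (rule inf_le1)
  have "\<forall>\<^sub>F q in primes_at_top. prime q"
    unfolding primes_at_top_def eventually_inf_principal by simp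
  moreover have "\<forall>\<^sub>F q in primes_at_top. 4 \<le> q"
    using at_top by (rule filter_leD) (rule eventually_ge_at_top)
  moreover have "\<forall>\<^sub>F q in primes_at_top. 2 ^ m q \<le> sqrt (real q)"
    using m_small at_top by (rule eventually_two_pow_le_sqrt)
  moreover have "\<forall>\<^sub>F q in primes_at_top. real (t q) ^ m q / sqrt (real q) < 1"
    by (rule order_tendstoD(2)[OF t_small]) simp
  ultimately have lower: "\<forall>\<^sub>F q in primes_at_top.
      1 - 4 * (real (t q) ^ m q / sqrt (real q)) \<le> good_prob q (m q) (t q) 1"
  proof eventually_elim
    case (elim q)
    have "sqrt (real q) \<le> real q / 2"
      using elim(2) by (intro sqrt_le_half) simp
    moreover have "real (t q) ^ m q < sqrt (real q)"
      using elim(2,4) by (simp add: divide_less_eq)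
    moreover have "real (t q) \<le> real (t q) ^ m q"
      using t_pos[of q] m_ge[of q] by (intro self_le_power) auto
    moreover have "real (m q) \<le> 2 ^ m q"
      by (rule real_le_two_power)
    ultimately have "t q \<le> q" "m q \<le> q"
      using elim(3) by linarith+
    then show ?case
      using good_prob_ge[OF elim(1) _ m_ge[of q]] failure_bound_le[OF elim(2) t_pos[of q] m_ge[of q] elim(3)]
      by fastforce
  qed
  have lim: "((\<lambda>q. 1 - 4 * (real (t q) ^ m q / sqrt (real q))) \<longlongrightarrow> 1) primes_at_top"
    using tendsto_diff[OF tendsto_const tendsto_mult[OF tendsto_const t_small]] by simp
  show "((\<lambda>q. good_prob q (m q) (t q) 1) \<longlongrightarrow> 1) primes_at_top"
    by (rule tendsto_sandwich[OF lower _ lim tendsto_const]) (simp add: good_prob_le_1)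
qed simp

end
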